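(* Let $(\delta_\nu)_{\nu\geqslant 0}$ be a sequence of positive numbers with $\delta_\nu\to 0$. Suppose $(n_\nu)_{\nu\geqslant 0}$ is a strictly increasing sequence of positive integers and $(a_\nu)_{\nu\geqslant 0}$ a sequence of integers with $1\leqslant a_\nu<F_{n_\nu}$ and $\gcd(a_\nu,F_{n_\nu})=1$, such that, writing $$\alpha_\nu=\frac{a_\nu}{F_{n_\nu}},\quad \beta_\nu=\left\{\frac{F_{n_\nu-1}a_\nu}{F_{n_\nu}}\right\},\quad I_\nu=\left[\alpha_\nu,\alpha_\nu+\frac{\delta_\nu}{F_{n_\nu}^2}\right],\quad J_\nu=\left[\beta_\nu,\beta_\nu+\frac{\delta_\nu}{F_{n_\nu}^2}\right],$$ one has $I_{\nu+1}\subset I_\nu$ and $J_{\nu+1}\subset J_\nu$ for all $\nu$. Let $\alpha$ and $\beta$ be the real numbers with $\{\alpha\}=\bigcap_\nu I_\nu$ and $\{\beta\}=\bigcap_\nu J_\nu$ (as sets). Then $$\limsup_{Q\to\infty}\, Q\left(\min_{x\in\mathbb{Z},\,1\leqslant x<Q}\|\alpha x\|\cdot\|\beta x\|\right)\geqslant \frac{2}{3+\sqrt5}=0.381966\ldots$$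
   Context: $F_n$ denotes the $n$-th Fibonacci number ($F_1=F_2=1$, $F_{n+1}=F_n+F_{n-1}$). For a real $t$, $\{t\}$ is its fractional part and $\|t\|$ is the distance from $t$ to the nearest integer. (Such sequences exist: they are built inductively, choosing $n_{\nu+1}$ large enough and $a_{\nu+1}$ so that the nested-interval conditions hold.) *)

theory Defs
  imports Complex_Main "HOL-Number_Theory.Fib" "HOL-Library.Extended_Real"
begin

definition dist_int :: "real \<Rightarrow> real" where
  "dist_int t = min (frac t) (1 - frac t)"

definition alpha_seq :: "(nat \<Rightarrow> int) \<Rightarrow> (nat \<Rightarrow> nat) \<Rightarrow> nat \<Rightarrow> real" where
  "alpha_seq a n \<nu> = real_of_int (a \<nu>) / real (fib (n \<nu>))"

definition beta_seq :: "(nat \<Rightarrow> int) \<Rightarrow> (nat \<Rightarrow> nat) \<Rightarrow> nat \<Rightarrow> real" where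
  "beta_seq a n \<nu> = frac (real (fib (n \<nu> - 1)) * real_of_int (a \<nu>) / real (fib (n \<nu>)))"

definition I_int :: "(nat \<Rightarrow> real) \<Rightarrow> (nat \<Rightarrow> int) \<Rightarrow> (nat \<Rightarrow> nat) \<Rightarrow> nat \<Rightarrow> real set" where
  "I_int \<delta> a n \<nu> = {alpha_seq a n \<nu> .. alpha_seq a n \<nu> + \<delta> \<nu> / (real (fib (n \<nu>)))^2}"

definition J_int :: "(nat \<Rightarrow> real) \<Rightarrow> (nat \<Rightarrow> int) \<Rightarrow> (nat \<Rightarrow> nat) \<Rightarrow> nat \<Rightarrow> real set" where
  "J_int \<delta> a n \<nu> = {beta_seq a n \<nu> .. beta_seq a n \<nu> + \<delta> \<nu> / (real (fib (n \<nu>)))^2}"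

end

theory Submission
  imports Defs
begin

text \<open>
  Take \<open>Q = F\<^sub>n\<close> with \<open>n = n\<^sub>\<nu>\<close> and \<open>1 \<le> x < F\<^sub>n\<close>. Up to errors of size \<open>\<delta>\<^sub>\<nu>/F\<^sub>n\<close>,
  \<open>\<parallel>\<alpha>x\<parallel>\<close> and \<open>\<parallel>\<beta>x\<parallel>\<close> equal \<open>|U|/F\<^sub>n\<close> and \<open>|w|/F\<^sub>n\<close>, where \<open>U \<equiv> a x\<close> and
  \<open>w \<equiv> F\<^sub>n\<^sub>-\<^sub>1 U (mod F\<^sub>n)\<close> are reduced residues. The nonzero points \<open>(U, w)\<close> of the lattice
  \<open>w \<equiv> F\<^sub>n\<^sub>-\<^sub>1 U (mod F\<^sub>n)\<close> satisfy \<open>|U| |w| \<ge> F\<^sub>n\<^sub>-\<^sub>2\<close>: if \<open>F\<^sub>j\<^sub>+\<^sub>1 \<le> |U| < F\<^sub>j\<^sub>+\<^sub>2\<close>, writing the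
  point in a basis of Fibonacci vectors (Cassini's identity) gives \<open>|w| \<ge> F\<^sub>n\<^sub>-\<^sub>j\<^sub>-\<^sub>1\<close>, and
  \<open>F\<^sub>j\<^sub>+\<^sub>1 F\<^sub>n\<^sub>-\<^sub>j\<^sub>-\<^sub>1 \<ge> F\<^sub>n\<^sub>-\<^sub>2\<close>. Hence \<open>Q \<cdot> min\<^sub>x \<parallel>\<alpha>x\<parallel> \<parallel>\<beta>x\<parallel> \<ge> F\<^sub>n\<^sub>-\<^sub>2/F\<^sub>n - \<delta>\<^sub>\<nu>\<close>, which tends
  to \<open>\<phi>\<^sup>-\<^sup>2 = 2/(3 + \<surd>5)\<close>.
\<close>

lemma fib_add_le_mult: "fib (m + k) \<le> fib (Suc m) * fib (Suc k)"
proof (cases k)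
  case 0
  then show ?thesis using fib_Suc_mono[of m] by simp
next
  case (Suc l)
  have "fib (m + k) = fib (Suc l) * fib (Suc m) + fib l * fib m"
    using Suc fib_add[of m l] by simp
  also have "\<dots> \<le> fib (Suc l) * fib (Suc m) + fib l * fib (Suc m)"
    using fib_Suc_mono[of m] by simp
  also have "\<dots> = fib (Suc m) * fib (Suc k)"
    using Suc by (simp add: algebra_simps)
  finally show ?thesis .
qed

lemma fib_less_fib:
  assumes "2 \<le> m" "m < k"
  shows "fib m < fib k"
proof -
  have "strict_mono (\<lambda>i. fib (i + 2))"
    by (rule strict_mono_Suc_iff[THEN iffD2]) (simp add: fib_neq_0_nat)
  then have "fib (m - 2 + 2) < fib (k - 2 + 2)"
    by (rule strict_monoD) (use assms in simp)
  moreover have "2 \<le> k"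
    using assms by simp
  ultimately show ?thesis
    using assms(1) by (simp only: le_add_diff_inverse2)
qed

lemma fib_bracket:
  assumes "1 \<le> u" "u < fib n"
  shows "\<exists>j. j + 2 \<le> n \<and> fib (j + 1) \<le> u \<and> u < fib (j + 2)"
  using assms(2)
proof (induction n)
  case 0
  then show ?case by simp
next
  case (Suc n)
  show ?case
  proof (cases "u < fib n")
    case True
    then obtain j where "j + 2 \<le> n" "fib (j + 1) \<le> u" "u < fib (j + 2)"
      using Suc.IH by blast
    then show ?thesis
      by (intro exI[of _ j]) simp
  next
    case False
    with assms(1) Suc.prems have "2 \<le> n"
      by (cases "n \<le> 1") (auto simp: le_Suc_eq)
    with False Suc.prems show ?thesis
      by (intro exI[of _ "n - 1"]) simp
  qed
qed

lemma tendsto_fib_ratio: "(\<lambda>m. real (fib (m - 2)) / real (fib m)) \<longlonglongrightarrow> 2 / (3 + sqrt 5)"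
proof -
  define \<phi> :: real where "\<phi> = (1 + sqrt 5) / 2"
  define g where "g m = real (fib m) / (\<phi> ^ m / sqrt 5)" for m
  have "\<phi> > 0" by (simp add: \<phi>_def add_pos_nonneg)
  have g: "g \<longlonglongrightarrow> 1"
    unfolding g_def \<phi>_def by (rule fib_asymptotics)
  have rescale: "x / y = (x / (\<phi> ^ m / sqrt 5)) / (y / (\<phi> ^ (m + 2) / sqrt 5)) / \<phi>\<^sup>2"
    if "y > 0" for x y :: real and m
    using \<open>\<phi> > 0\<close> that by (simp add: power_add power2_eq_square field_simps)
  have ratio: "real (fib m) / real (fib (m + 2)) = g m / g (m + 2) / \<phi>\<^sup>2" for m
    unfolding g_def by (intro rescale of_nat_0_less_iff[THEN iffD2] fib_neq_0_nat) simp
  have phi_square: "\<phi>\<^sup>2 = (3 + sqrt 5) / 2"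
    by (simp add: \<phi>_def power2_eq_square field_simps)
  have limit: "1 / 1 / \<phi>\<^sup>2 = 2 / (3 + sqrt 5)"
    unfolding phi_square by simp
  have "(\<lambda>m. g m / g (m + 2) / \<phi>\<^sup>2) \<longlonglongrightarrow> 1 / 1 / \<phi>\<^sup>2"
    using \<open>\<phi> > 0\<close> by (intro tendsto_intros g LIMSEQ_ignore_initial_segment[OF g]) simp_all
  then have "(\<lambda>m. real (fib m) / real (fib (m + 2))) \<longlonglongrightarrow> 2 / (3 + sqrt 5)"
    unfolding ratio limit .
  then have "(\<lambda>m. real (fib (m + 2 - 2)) / real (fib (m + 2))) \<longlonglongrightarrow> 2 / (3 + sqrt 5)"
    by (simp only: add_diff_cancel_right')
  then show ?thesis
    by (rule LIMSEQ_offset)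
qed

lemma abs_add_mult_same_sign:
  fixes a b x y :: "'a :: linordered_idom"
  assumes "0 \<le> a" "0 \<le> b" "0 \<le> x * y"
  shows "\<bar>a * x + b * y\<bar> = a * \<bar>x\<bar> + b * \<bar>y\<bar>"
proof (cases "0 \<le> x \<and> 0 \<le> y")
  case True
  then show ?thesis using assms by simp
next
  case False
  with assms(3) have "x \<le> 0" "y \<le> 0"
    by (auto simp: zero_le_mult_iff)
  then show ?thesis
    using assms(1,2) by (simp add: abs_of_nonpos mult_nonneg_nonpos add_nonpos_nonpos)
qed

text \<open>
  \<open>(P, Q)\<close> are the coordinates of \<open>((-1)\<^sup>j u, w)\<close> in the lattice basis
  \<open>(F\<^sub>j\<^sub>+\<^sub>1, F\<^sub>i\<^sub>+\<^sub>1), (F\<^sub>j\<^sub>+\<^sub>2, -F\<^sub>i)\<close>. Since \<open>u < F\<^sub>j\<^sub>+\<^sub>2\<close>, they cannot have the same sign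
  (nor can \<open>P\<close> vanish), and then \<open>|w| = F\<^sub>i\<^sub>+\<^sub>1|P| + F\<^sub>i|Q| \<ge> F\<^sub>i\<^sub>+\<^sub>1\<close>.
\<close>
lemma fib_lattice_bracketed:
  fixes i j :: nat and u w t :: int
  assumes u_ge: "int (fib (j + 1)) \<le> u" and u_less: "u < int (fib (j + 2))"
    and w_eq: "w = int (fib (i + j + 1)) * u - int (fib (i + j + 2)) * t"
  shows "int (fib (i + j)) \<le> u * \<bar>w\<bar>"
proof -
  define A B C D E where "A = int (fib (j + 1))" and "B = int (fib (j + 2))"
    and "C = int (fib j)" and "D = int (fib (i + 1))" and "E = int (fib i)"
  define P Q where "P = u * A - t * B" and "Q = t * A - u * C"
  have nonneg: "0 \<le> A" "0 \<le> B" "0 \<le> D" "0 \<le> E"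
    unfolding A_def B_def D_def E_def by simp_all
  have cassini: "A\<^sup>2 - B * C = (-1) ^ j"
    using fib_Cassini_int[of j] unfolding A_def B_def C_def by (simp add: algebra_simps)
  have "A * P + B * Q = u * (A\<^sup>2 - B * C)"
    unfolding P_def Q_def by (simp add: algebra_simps power2_eq_square)
  then have u_coords: "\<bar>A * P + B * Q\<bar> = u"
    using u_ge cassini by (simp add: abs_mult)
  have "int (fib (i + j + 1)) = D * A + E * C" "int (fib (i + j + 2)) = D * B + E * A"
    using fib_add[of i j] fib_add[of i "Suc j"] unfolding A_def B_def C_def D_def E_def
    by (simp_all add: algebra_simps flip: of_nat_mult of_nat_add)
  then have w_coords: "w = D * P + E * (- Q)"
    unfolding w_eq P_def Q_def by (simp add: algebra_simps)
  have "\<not> (Q \<noteq> 0 \<and> 0 \<le> P * Q)"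
  proof
    assume "Q \<noteq> 0 \<and> 0 \<le> P * Q"
    then have "B * 1 \<le> B * \<bar>Q\<bar>"
      using nonneg by (intro mult_left_mono) auto
    then have "B \<le> A * \<bar>P\<bar> + B * \<bar>Q\<bar>"
      using nonneg by (simp add: add_increasing)
    also have "\<dots> = u"
      using u_coords abs_add_mult_same_sign[of A B P Q] nonneg \<open>Q \<noteq> 0 \<and> 0 \<le> P * Q\<close> by simp
    finally show False
      using u_less B_def by simp
  qed
  moreover have "P \<noteq> 0 \<or> Q \<noteq> 0"
    using u_coords u_ge fib_neq_0_nat[of "j + 1"] by auto
  ultimately have "P \<noteq> 0" "0 \<le> P * (- Q)"
    by force+
  then have "D * 1 \<le> D * \<bar>P\<bar>"
    using nonneg by (intro mult_left_mono) auto
  then have "D \<le> \<bar>w\<bar>"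
    using w_coords abs_add_mult_same_sign[of D E P "- Q"] nonneg \<open>0 \<le> P * (- Q)\<close>
    by (simp add: add_increasing2)
  then have "A * D \<le> u * \<bar>w\<bar>"
    using u_ge nonneg A_def by (intro mult_mono) simp_all
  moreover have "int (fib (i + j)) \<le> A * D"
    using fib_add_le_mult[of j i] unfolding A_def D_def by (simp add: add.commute flip: of_nat_mult)
  ultimately show ?thesis
    by linarith
qed

lemma fib_lattice_min:
  fixes n :: nat and U w :: int
  assumes "U \<noteq> 0" "\<bar>U\<bar> < int (fib n)" "int (fib n) dvd int (fib (n - 1)) * U - w"
  shows "int (fib (n - 2)) \<le> \<bar>U\<bar> * \<bar>w\<bar>"
proof -
  have pos_case: "int (fib (n - 2)) \<le> u * \<bar>v\<bar>"
    if u_bounds: "0 < u" "u < int (fib n)" and rel: "int (fib (n - 1)) * u - v = int (fib n) * t"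
    for u v t
  proof -
    have "1 \<le> nat u" "nat u < fib n"
      using u_bounds by auto
    then obtain j where j: "j + 2 \<le> n" "fib (j + 1) \<le> nat u" "nat u < fib (j + 2)"
      using fib_bracket by blast
    define i where "i = n - j - 2"
    have "n = i + j + 2"
      using i_def j(1) by simp
    then have "int (fib (i + j)) \<le> u * \<bar>v\<bar>"
      using j u_bounds rel by (intro fib_lattice_bracketed[where t = t]) (simp_all add: algebra_simps)
    then show ?thesis
      using \<open>n = i + j + 2\<close> by simp
  qed
  obtain t where t: "int (fib (n - 1)) * U - w = int (fib n) * t"
    using assms(3) by blast
  show ?thesis
  proof (cases "0 < U")
    case True
    then show ?thesis using pos_case[OF _ _ t] assms(2) by simp
  next
    case False
    have "int (fib (n - 1)) * (- U) - (- w) = int (fib n) * (- t)"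
      using t by (simp add: algebra_simps)
    then show ?thesis
      using pos_case[of "- U" "- w" "- t"] False assms(1,2) by simp
  qed
qed

lemma dist_int_le: "dist_int t \<le> \<bar>t - of_int k\<bar>"
proof (cases "k \<le> \<lfloor>t\<rfloor>")
  case True
  then have "of_int k \<le> (of_int \<lfloor>t\<rfloor> :: real)" by simp
  then show ?thesis unfolding dist_int_def frac_def using of_int_floor_le[of t] by linarith
next
  case False
  then have "of_int k \<ge> (of_int \<lfloor>t\<rfloor> :: real) + 1" by linarith
  then show ?thesis unfolding dist_int_def frac_def using real_of_int_floor_add_one_gt[of t] by linarith
qed

lemma dist_int_attained: "\<exists>k. dist_int t = \<bar>t - of_int k\<bar>"
proof (cases "frac t \<le> 1 - frac t")
  case True
  then show ?thesis unfolding dist_int_def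
    by (intro exI[of _ "\<lfloor>t\<rfloor>"]) (simp add: frac_def)
next
  case False
  then show ?thesis unfolding dist_int_def using frac_lt_1[of t]
    by (intro exI[of _ "\<lfloor>t\<rfloor> + 1"]) (auto simp: frac_def)
qed

lemma dist_int_nonneg: "0 \<le> dist_int t"
  and dist_int_le_half: "dist_int t \<le> 1 / 2"
  unfolding dist_int_def using frac_ge_0[of t] frac_lt_1[of t] by (auto simp: min_def)

lemma dist_int_diff_le: "dist_int t - \<bar>s - t\<bar> \<le> dist_int s"
proof -
  obtain k where "dist_int s = \<bar>s - of_int k\<bar>"
    using dist_int_attained by blast
  then show ?thesis
    using dist_int_le[of t k] by linarith
qed

lemma dist_int_frac_mult: "dist_int (frac y * of_int x) = dist_int (y * of_int x)"
proof -
  have "y * of_int x = frac y * of_int x + of_int (\<lfloor>y\<rfloor> * x)"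
    by (simp add: frac_def algebra_simps)
  then show ?thesis
    unfolding dist_int_def by (simp add: frac_def)
qed

lemma dist_int_of_int_div:
  fixes p N :: int
  assumes "0 < N"
  shows "\<exists>r. N dvd p - r \<and> dist_int (of_int p / of_int N) = of_int \<bar>r\<bar> / of_int N"
proof -
  obtain k where k: "dist_int (of_int p / of_int N) = \<bar>of_int p / of_int N - of_int k\<bar>"
    using dist_int_attained by blast
  have "of_int p / of_int N - of_int k = (of_int (p - k * N) :: real) / of_int N"
    using assms by (simp add: field_simps)
  then show ?thesis
    using k assms by (intro exI[of _ "p - k * N"]) (simp add: abs_divide)
qed

lemma perturbed_product_ge:
  fixes s t s' t' \<eta> :: real
  assumes "0 \<le> s" "0 \<le> t" "s + t \<le> 1" "0 \<le> \<eta>"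
    and "s - \<eta> \<le> s'" "t - \<eta> \<le> t'" "0 \<le> s'" "0 \<le> t'"
  shows "s * t - \<eta> \<le> s' * t'"
proof (cases "\<eta> \<le> s \<and> \<eta> \<le> t")
  case True
  have "\<eta> * (s + t) \<le> \<eta>"
    using assms(3,4) mult_left_mono[of "s + t" 1 \<eta>] by simp
  then have "s * t - \<eta> \<le> s * t - \<eta> * (s + t) + \<eta> * \<eta>"
    using mult_nonneg_nonneg[OF assms(4) assms(4)] by linarith
  also have "\<dots> = (s - \<eta>) * (t - \<eta>)"
    by (simp add: algebra_simps)
  also have "\<dots> \<le> s' * t'"
    using True assms(5,6) by (intro mult_mono) auto
  finally show ?thesis .
next
  case False
  then have "s * t \<le> \<eta>"
    using assms(1-3) mult_left_mono[of t 1 s] mult_right_mono[of s 1 t] by auto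
  then show ?thesis
    using mult_nonneg_nonneg[OF assms(7,8)] by linarith
qed

lemma fib_dist_int_product:
  fixes n :: nat and A x :: int
  defines "N \<equiv> real (fib n)"
  assumes "coprime A (int (fib n))" "1 \<le> x" "x < int (fib n)"
  shows "real (fib (n - 2))
    \<le> N\<^sup>2 * (dist_int (of_int (A * x) / N) * dist_int (of_int (int (fib (n - 1)) * A * x) / N))"
proof -
  have "0 < int (fib n)"
    using assms(3,4) by simp
  then obtain U w where
      U: "int (fib n) dvd A * x - U" "dist_int (of_int (A * x) / N) = of_int \<bar>U\<bar> / N" and
      w: "int (fib n) dvd int (fib (n - 1)) * A * x - w"
        "dist_int (of_int (int (fib (n - 1)) * A * x) / N) = of_int \<bar>w\<bar> / N"
    unfolding N_def using dist_int_of_int_div by (metis of_int_of_nat_eq)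
  have "int (fib n) dvd int (fib (n - 1)) * U - w"
  proof -
    have "int (fib (n - 1)) * U - w
        = (int (fib (n - 1)) * A * x - w) - int (fib (n - 1)) * (A * x - U)"
      by (simp add: algebra_simps)
    then show ?thesis
      by (simp only:) (intro dvd_diff w(1) dvd_mult U(1))
  qed
  moreover have "U \<noteq> 0"
  proof
    assume "U = 0"
    then have "int (fib n) dvd x"
      using U(1) assms(2) by (simp add: coprime_commute coprime_dvd_mult_right_iff)
    then show False
      using assms(3,4) zdvd_imp_le by fastforce
  qed
  moreover have "\<bar>U\<bar> < int (fib n)"
  proof -
    have "of_int \<bar>U\<bar> / N \<le> 1 / 2"
      using U(2) dist_int_le_half by metis
    then show ?thesis
      using \<open>0 < int (fib n)\<close> unfolding N_def by (simp add: divide_le_eq)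
  qed
  ultimately have "int (fib (n - 2)) \<le> \<bar>U\<bar> * \<bar>w\<bar>"
    by (rule fib_lattice_min[rotated 2])
  moreover have "N\<^sup>2 * (of_int \<bar>U\<bar> / N * (of_int \<bar>w\<bar> / N)) = of_int (\<bar>U\<bar> * \<bar>w\<bar>)"
    using \<open>0 < int (fib n)\<close> unfolding N_def by (simp add: power2_eq_square field_simps)
  ultimately show ?thesis
    unfolding U(2) w(2) by (metis of_int_le_iff of_int_of_nat_eq)
qed

lemma fib_approx_product_bound:
  fixes n :: nat and A x :: int and \<alpha> \<beta> d :: real
  defines "N \<equiv> real (fib n)"
  assumes coprime: "coprime A (int (fib n))" and x_bounds: "1 \<le> x" "x < int (fib n)"
    and "0 \<le> d"
    and \<alpha>_approx: "\<bar>\<alpha> - of_int A / N\<bar> \<le> d / N\<^sup>2"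
    and \<beta>_approx: "\<bar>\<beta> - frac (real (fib (n - 1)) * of_int A / N)\<bar> \<le> d / N\<^sup>2"
  shows "real (fib (n - 2)) / N - d \<le> N * (dist_int (\<alpha> * of_int x) * dist_int (\<beta> * of_int x))"
proof -
  have "0 < N" "\<bar>of_int x\<bar> \<le> N"
    using x_bounds unfolding N_def by simp_all
  have perturb: "dist_int (r * of_int x) - d / N \<le> dist_int (y * of_int x)"
    if "\<bar>y - r\<bar> \<le> d / N\<^sup>2" for y r
  proof -
    have "\<bar>y * of_int x - r * of_int x\<bar> = \<bar>y - r\<bar> * \<bar>of_int x\<bar>"
      by (metis abs_mult left_diff_distrib)
    also have "\<dots> \<le> d / N\<^sup>2 * N"
      using that \<open>\<bar>of_int x\<bar> \<le> N\<close> \<open>0 \<le> d\<close> by (intro mult_mono) simp_all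
    also have "\<dots> = d / N"
      using \<open>0 < N\<close> by (simp add: power2_eq_square)
    finally show ?thesis
      using dist_int_diff_le[of "r * of_int x" "y * of_int x"] by linarith
  qed
  define s t where "s = dist_int (of_int (A * x) / N)"
    and "t = dist_int (of_int (int (fib (n - 1)) * A * x) / N)"
  have "s - d / N \<le> dist_int (\<alpha> * of_int x)"
    using perturb[OF \<alpha>_approx] unfolding s_def by simp
  moreover have "t - d / N \<le> dist_int (\<beta> * of_int x)"
    using perturb[OF \<beta>_approx] unfolding t_def dist_int_frac_mult by simp
  ultimately have product: "s * t - d / N \<le> dist_int (\<alpha> * of_int x) * dist_int (\<beta> * of_int x)"
    using \<open>0 \<le> d\<close> \<open>0 < N\<close> unfolding s_def t_def
    by (intro perturbed_product_ge dist_int_nonneg)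
      (simp_all add: dist_int_le_half add_mono[OF dist_int_le_half dist_int_le_half, simplified])
  have "real (fib (n - 2)) \<le> N\<^sup>2 * (s * t)"
    unfolding s_def t_def N_def using coprime x_bounds by (rule fib_dist_int_product)
  then have "real (fib (n - 2)) / N - d \<le> N * (s * t) - d"
    using \<open>0 < N\<close> by (simp add: divide_le_eq power2_eq_square algebra_simps)
  also have "\<dots> = N * (s * t - d / N)"
    using \<open>0 < N\<close> by (simp add: right_diff_distrib)
  also have "\<dots> \<le> N * (dist_int (\<alpha> * of_int x) * dist_int (\<beta> * of_int x))"
    using product \<open>0 < N\<close> by (intro mult_left_mono) simp_all
  finally show ?thesis .
qed

lemma fib_scaled_min_product_ge:
  fixes \<delta> :: "nat \<Rightarrow> real" and n :: "nat \<Rightarrow> nat" and a :: "nat \<Rightarrow> int"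
    and \<nu> :: nat and \<alpha> \<beta> :: real
  defines "N \<equiv> fib (n \<nu>)"
  assumes "3 \<le> n \<nu>" "0 \<le> \<delta> \<nu>" "gcd (a \<nu>) (int N) = 1"
    and "\<alpha> \<in> I_int \<delta> a n \<nu>" "\<beta> \<in> J_int \<delta> a n \<nu>"
  shows "real (fib (n \<nu> - 2)) / real N - \<delta> \<nu>
    \<le> real N * Min ((\<lambda>x::int. dist_int (\<alpha> * of_int x) * dist_int (\<beta> * of_int x))
                      ` {x. 1 \<le> x \<and> x < int N})"
proof -
  define h where "h x = dist_int (\<alpha> * of_int x) * dist_int (\<beta> * of_int x)" for x :: int
  define S where "S = {x::int. 1 \<le> x \<and> x < int N}"
  have "fib 3 \<le> N"
    unfolding N_def using assms(2) by (rule fib_mono)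
  then have "1 \<in> S"
    unfolding S_def by (simp add: numeral_3_eq_3)
  moreover have "finite S"
    unfolding S_def by (rule finite_subset[of _ "{1..<int N}"]) auto
  ultimately have "Min (h ` S) \<in> h ` S"
    by (intro Min_in) auto
  then obtain x where "x \<in> S" "Min (h ` S) = h x"
    by auto
  moreover have "real (fib (n \<nu> - 2)) / real N - \<delta> \<nu> \<le> real N * h x"
    unfolding h_def N_def
  proof (rule fib_approx_product_bound)
    show "coprime (a \<nu>) (int (fib (n \<nu>)))"
      using assms(4) unfolding N_def by (simp add: coprime_iff_gcd_eq_1)
    show "1 \<le> x" "x < int (fib (n \<nu>))"
      using \<open>x \<in> S\<close> unfolding S_def N_def by simp_all
    show "\<bar>\<alpha> - of_int (a \<nu>) / real (fib (n \<nu>))\<bar> \<le> \<delta> \<nu> / (real (fib (n \<nu>)))\<^sup>2"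
      using assms(5) unfolding I_int_def alpha_seq_def by simp
    show "\<bar>\<beta> - frac (real (fib (n \<nu> - 1)) * of_int (a \<nu>) / real (fib (n \<nu>)))\<bar>
        \<le> \<delta> \<nu> / (real (fib (n \<nu>)))\<^sup>2"
      using assms(6) unfolding J_int_def beta_seq_def by simp
  qed (use assms(3) in simp)
  ultimately show ?thesis
    unfolding h_def S_def by simp
qed

lemma limsup_ge_of_subseq_tendsto:
  fixes f :: "nat \<Rightarrow> ereal" and g :: "nat \<Rightarrow> real"
  assumes "strict_mono r" "g \<longlonglongrightarrow> c" "\<And>k. ereal (g k) \<le> f (r k)"
  shows "ereal c \<le> limsup f"
proof -
  have "ereal c = limsup (\<lambda>k. ereal (g k))"
    using assms(2) by (intro lim_imp_Limsup[symmetric]) (simp_all add: tendsto_ereal)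
  also have "\<dots> \<le> limsup (f \<circ> r)"
    using assms(3) by (intro Limsup_mono always_eventually) simp
  also have "\<dots> \<le> limsup f"
    using assms(1) by (rule limsup_subseq_mono)
  finally show ?thesis .
qed

theorem theorem1:
  fixes \<delta> :: "nat \<Rightarrow> real" and n :: "nat \<Rightarrow> nat" and a :: "nat \<Rightarrow> int"
    and \<alpha> \<beta> :: real
  assumes delta_pos: "\<And>\<nu>. \<delta> \<nu> > 0"
    and delta_lim: "\<delta> \<longlonglongrightarrow> 0"
    and n_mono: "strict_mono n"
    and n_pos: "\<And>\<nu>. n \<nu> > 0"
    and a_bounds: "\<And>\<nu>. 1 \<le> a \<nu> \<and> a \<nu> < int (fib (n \<nu>))"
    and a_coprime: "\<And>\<nu>. gcd (a \<nu>) (int (fib (n \<nu>))) = 1"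
    and I_nested: "\<And>\<nu>. I_int \<delta> a n (Suc \<nu>) \<subseteq> I_int \<delta> a n \<nu>"
    and J_nested: "\<And>\<nu>. J_int \<delta> a n (Suc \<nu>) \<subseteq> J_int \<delta> a n \<nu>"
    and alpha_def: "(\<Inter>\<nu>. I_int \<delta> a n \<nu>) = {\<alpha>}"
    and beta_def: "(\<Inter>\<nu>. J_int \<delta> a n \<nu>) = {\<beta>}"
  shows "limsup (\<lambda>Q::nat. ereal (real Q *
            Min ((\<lambda>x::int. dist_int (\<alpha> * of_int x) * dist_int (\<beta> * of_int x))
                   ` {x. 1 \<le> x \<and> x < int Q})))
         \<ge> ereal (2 / (3 + sqrt 5))"
proof (rule limsup_ge_of_subseq_tendsto)
  define m where "m \<nu> = n (\<nu> + 3)" for \<nu>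
  have m_mono: "strict_mono m"
    using n_mono unfolding m_def strict_mono_def by simp
  have m_ge: "3 \<le> m \<nu>" for \<nu>
    using seq_suble[OF n_mono, of "\<nu> + 3"] unfolding m_def by simp
  show "strict_mono (\<lambda>\<nu>. fib (m \<nu>))"
  proof (rule strict_monoI)
    show "fib (m \<mu>) < fib (m \<nu>)" if "\<mu> < \<nu>" for \<mu> \<nu>
      using m_ge[of \<mu>] m_mono that by (intro fib_less_fib) (simp_all add: strict_mono_less)
  qed
  have "(\<lambda>\<nu>. real (fib (m \<nu> - 2)) / real (fib (m \<nu>))) \<longlonglongrightarrow> 2 / (3 + sqrt 5)"
    using tendsto_fib_ratio filterlim_subseq[OF m_mono] by (rule filterlim_compose)
  then show "(\<lambda>\<nu>. real (fib (m \<nu> - 2)) / real (fib (m \<nu>)) - \<delta> (\<nu> + 3))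
      \<longlonglongrightarrow> 2 / (3 + sqrt 5)"
    using tendsto_diff[OF _ LIMSEQ_ignore_initial_segment[OF delta_lim, of 3]] by simp
  show "ereal (real (fib (m \<nu> - 2)) / real (fib (m \<nu>)) - \<delta> (\<nu> + 3))
      \<le> ereal (real (fib (m \<nu>)) *
            Min ((\<lambda>x::int. dist_int (\<alpha> * of_int x) * dist_int (\<beta> * of_int x))
                   ` {x. 1 \<le> x \<and> x < int (fib (m \<nu>))}))" for \<nu>
  proof -
    have "\<alpha> \<in> I_int \<delta> a n (\<nu> + 3)" "\<beta> \<in> J_int \<delta> a n (\<nu> + 3)"
      using alpha_def beta_def by blast+
    then show ?thesis
      using fib_scaled_min_product_ge[of n "\<nu> + 3" \<delta> a \<alpha> \<beta>] m_ge[of \<nu>]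
        delta_pos[of "\<nu> + 3"] a_coprime[of "\<nu> + 3"]
      unfolding m_def by simp
  qed
qed

end
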